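(* Let $U$ be a rise function, $m\ge1$, $\varepsilon_r\ge0$ and $\sigma_r\ge0$ for $r\in\{1,\dots,m\}$, $\varepsilon=\sum_{r=1}^m\varepsilon_r$, $\sigma_l\ge0$, and let $\sigma_u\ge0$ be such that $\bigodot_{r=1}^m(S_{\sigma_r}\circ H_{\varepsilon_r})(\phi)\le H_\varepsilon\circ S_{\sigma_u}(\phi)$. Let $\psi\le\phi$, and assume all phases and pulse strengths occurring in the compositions below lie in the range where the defining condition of icpd/dcpd applies. If $U$ is icpd then $$S_{\sigma_l}\circ H_\varepsilon(\phi)-S_{\sigma_l}\circ H_\varepsilon(\psi)\le\bigodot_{r=1}^m(S_{\sigma_r}\circ H_{\varepsilon_r})(\phi)-\bigodot_{r=1}^m(S_{\sigma_r}\circ H_{\varepsilon_r})(\psi)\le H_\varepsilon\circ S_{\sigma_u}(\phi)-H_\varepsilon\circ S_{\sigma_u}(\psi).$$ If $U$ is dcpd then both inequalities hold with $\le$ replaced by $\ge$.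
   Context: A rise function is a smooth $U:[0,\infty)\to[0,\infty)$ with $U'>0$, $U(0)=0$, $U(1)=1$. $H_\varepsilon(\phi)=U^{-1}(U(\phi)+\varepsilon)$, $S_\sigma(\phi)=\phi+\sigma$, and $\bigodot_{r=1}^m(S_{\sigma_r}\circ H_{\varepsilon_r}):=S_{\sigma_m}\circ H_{\varepsilon_m}\circ\cdots\circ S_{\sigma_1}\circ H_{\varepsilon_1}$. Define $\Delta H(\phi,\Delta\phi,\varepsilon):=H_\varepsilon(\phi+\Delta\phi)-H_\varepsilon(\phi)$ on $\mathcal{D}=\{(\phi,\Delta\phi,\varepsilon):0\le\varepsilon\le1,\ 0\le\phi\le1,\ 0\le\Delta\phi\le U^{-1}(1-\varepsilon)-\phi\}$. $U$ is icpd (increasing the change of phase differences) if $\frac{\partial}{\partial\phi}\Delta H\ge0$ on $\mathcal{D}$, and dcpd (decreasing the change of phase differences) if $\frac{\partial}{\partial\phi}\Delta H\le0$ on $\mathcal{D}$. *)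

theory Defs
  imports "HOL-Analysis.Analysis"
begin

definition smooth_on_nonneg :: "(real \<Rightarrow> real) \<Rightarrow> bool" where
  "smooth_on_nonneg U \<longleftrightarrow>
     (\<exists>D :: nat \<Rightarrow> real \<Rightarrow> real.
        (\<forall>x\<ge>0. D 0 x = U x) \<and>
        (\<forall>k. \<forall>x\<ge>0. (D k has_real_derivative D (Suc k) x) (at x within {0..})))"

definition rise_function :: "(real \<Rightarrow> real) \<Rightarrow> bool" where
  "rise_function U \<longleftrightarrow>
     smooth_on_nonneg U \<and>
     (\<forall>x\<ge>0. U x \<ge> 0) \<and>
     (\<forall>x\<ge>0. \<forall>d. (U has_real_derivative d) (at x within {0..}) \<longrightarrow> d > 0) \<and>
     U 0 = 0 \<and> U 1 = 1"

definition Uinv :: "(real \<Rightarrow> real) \<Rightarrow> real \<Rightarrow> real" where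
  "Uinv U y = the_inv_into {0..} U y"

definition Hf :: "(real \<Rightarrow> real) \<Rightarrow> real \<Rightarrow> real \<Rightarrow> real" where
  "Hf U \<epsilon> \<phi> = Uinv U (U \<phi> + \<epsilon>)"

definition Sf :: "real \<Rightarrow> real \<Rightarrow> real" where
  "Sf \<sigma> \<phi> = \<phi> + \<sigma>"

fun compo :: "(real \<Rightarrow> real) \<Rightarrow> (nat \<Rightarrow> real) \<Rightarrow> (nat \<Rightarrow> real) \<Rightarrow> nat \<Rightarrow> real \<Rightarrow> real" where
  "compo U eps sig 0 \<phi> = \<phi>"
| "compo U eps sig (Suc r) \<phi> = Sf (sig (Suc r)) (Hf U (eps (Suc r)) (compo U eps sig r \<phi>))"

definition DeltaH :: "(real \<Rightarrow> real) \<Rightarrow> real \<Rightarrow> real \<Rightarrow> real \<Rightarrow> real" where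
  "DeltaH U \<phi> d \<epsilon> = Hf U \<epsilon> (\<phi> + d) - Hf U \<epsilon> \<phi>"

definition domD :: "(real \<Rightarrow> real) \<Rightarrow> (real \<times> real \<times> real) set" where
  "domD U = {(\<phi>, d, \<epsilon>). 0 \<le> \<epsilon> \<and> \<epsilon> \<le> 1 \<and> 0 \<le> \<phi> \<and> \<phi> \<le> 1 \<and> 0 \<le> d \<and> d \<le> Uinv U (1 - \<epsilon>) - \<phi>}"

text \<open>Partial derivative in phi, taken within the phi-slice of the domain D
  (one-sided at boundary points).\<close>
definition icpd :: "(real \<Rightarrow> real) \<Rightarrow> bool" where
  "icpd U \<longleftrightarrow> (\<forall>\<phi> d \<epsilon>. (\<phi>, d, \<epsilon>) \<in> domD U \<longrightarrow>
     (\<exists>D'. ((\<lambda>p. DeltaH U p d \<epsilon>) has_real_derivative D')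
              (at \<phi> within {p. (p, d, \<epsilon>) \<in> domD U}) \<and> D' \<ge> 0))"

definition dcpd :: "(real \<Rightarrow> real) \<Rightarrow> bool" where
  "dcpd U \<longleftrightarrow> (\<forall>\<phi> d \<epsilon>. (\<phi>, d, \<epsilon>) \<in> domD U \<longrightarrow>
     (\<exists>D'. ((\<lambda>p. DeltaH U p d \<epsilon>) has_real_derivative D')
              (at \<phi> within {p. (p, d, \<epsilon>) \<in> domD U}) \<and> D' \<le> 0))"

definition admissible :: "(real \<Rightarrow> real) \<Rightarrow> real \<Rightarrow> real \<Rightarrow> bool" where
  "admissible U x e \<longleftrightarrow> (x, 0, e) \<in> domD U"

end

theory Submission
  imports Defs
begin

(* Write H_e for the phase response, c_m for the composite map
   S_{sig m} o H_{eps m} o ... o S_{sig 1} o H_{eps 1} and E = eps 1 + ... + eps m.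
   Both cases (icpd and dcpd) are handled at once by a relation R, which is <= for
   icpd and >= for dcpd ("cpd_order").  The only use of the derivative condition is
   that the increment H_e (p + d) - H_e p is monotone in p in the order R; from it
   we derive a comparison of increments over intervals of different lengths.
   Lower bound: by induction on m, H_E phi - H_E psi is R-below c_m phi - c_m psi.
   Upper bound: by induction on m, c_m phi = H_E (phi + s) for a shift s >= 0 with
   H_E (psi + s) R-below c_m psi; the hypothesis on sigma_u forces s <= sigma_u, and
   monotonicity of increments in the base point gives the upper bound. *)

lemma increasing_from_deriv_within:
  fixes f :: "real \<Rightarrow> real"
  assumes pq: "p \<le> q" and sub: "{p..q} \<subseteq> S"
    and der: "\<And>x. x \<in> {p..q} \<Longrightarrow> \<exists>D. (f has_real_derivative D) (at x within S) \<and> D \<ge> 0"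
  shows "f p \<le> f q"
proof -
  have der_Icc: "\<exists>D. (f has_real_derivative D) (at x within {p..q}) \<and> D \<ge> 0"
    if "x \<in> {p..q}" for x
    using der[OF that] DERIV_subset[OF _ sub] by blast
  then obtain Df where "\<And>x. x \<in> {p..q} \<Longrightarrow> (f has_real_derivative Df x) (at x within {p..q})"
    by metis
  then have "continuous_on {p..q} f" by (rule DERIV_continuous_on)
  moreover have "\<exists>D. DERIV f x :> D \<and> D \<ge> 0" if "p < x" "x < q" for x
    using der_Icc[of x] that at_within_Icc_at[OF that] by auto
  ultimately show ?thesis using DERIV_nonneg_imp_increasing_open[OF pq] by blast
qed

lemma decreasing_from_deriv_within:
  fixes f :: "real \<Rightarrow> real"
  assumes pq: "p \<le> q" and sub: "{p..q} \<subseteq> S"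
    and der: "\<And>x. x \<in> {p..q} \<Longrightarrow> \<exists>D. (f has_real_derivative D) (at x within S) \<and> D \<le> 0"
  shows "f q \<le> f p"
proof -
  have "- f p \<le> - f q"
  proof (rule increasing_from_deriv_within[OF pq sub, where f = "\<lambda>x. - f x"])
    fix x assume "x \<in> {p..q}"
    then obtain D where "(f has_real_derivative D) (at x within S)" "D \<le> 0" using der by blast
    then show "\<exists>D. ((\<lambda>x. - f x) has_real_derivative D) (at x within S) \<and> D \<ge> 0"
      by (auto intro!: exI[of _ "-D"] DERIV_minus)
  qed
  then show ?thesis by simp
qed

definition cpd_order :: "(real \<Rightarrow> real) \<Rightarrow> (real \<Rightarrow> real \<Rightarrow> bool) \<Rightarrow> bool" where
  "cpd_order U R \<longleftrightarrow> (icpd U \<and> R = (\<le>)) \<or> (dcpd U \<and> R = (\<ge>))"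

definition chain_admissible ::
    "(real \<Rightarrow> real) \<Rightarrow> (nat \<Rightarrow> real) \<Rightarrow> (nat \<Rightarrow> real) \<Rightarrow> nat \<Rightarrow> real \<Rightarrow> bool" where
  "chain_admissible U eps sig m x \<longleftrightarrow>
     (\<forall>r\<in>{1..m}. admissible U (compo U eps sig (r - 1) x) (eps r))"

lemma chain_admissible_Suc:
  "chain_admissible U eps sig (Suc m) x \<longleftrightarrow>
     chain_admissible U eps sig m x \<and> admissible U (compo U eps sig m x) (eps (Suc m))"
proof -
  have "{1..Suc m} = insert (Suc m) {1..m}" by auto
  then show ?thesis by (auto simp: chain_admissible_def)
qed

context
  fixes U :: "real \<Rightarrow> real"
  assumes rise: "rise_function U"
begin

lemma U_0: "U 0 = 0" and U_1: "U 1 = 1" and U_nonneg: "0 \<le> x \<Longrightarrow> 0 \<le> U x"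
  using rise unfolding rise_function_def by auto

text \<open>A rise function has a positive (one-sided at 0) derivative at every point of
  [0,\<infinity>): smoothness provides a derivative, and the definition makes it positive.\<close>
lemma U_positive_derivative:
  assumes "0 \<le> x"
  shows "\<exists>d>0. (U has_real_derivative d) (at x within {0..})"
proof -
  from rise obtain D where D0: "\<forall>x\<ge>0. D 0 x = U x"
    and DSuc: "\<forall>k. \<forall>x\<ge>0. (D k has_real_derivative D (Suc k) x) (at x within {0..})"
    and pos: "\<forall>x\<ge>0. \<forall>d. (U has_real_derivative d) (at x within {0..}) \<longrightarrow> d > 0"
    unfolding rise_function_def smooth_on_nonneg_def by blast
  have "(U has_real_derivative D 1 x) (at x within {0..})"
    by (rule has_field_derivative_transform_within[where f = "D 0" and d = 1])
      (use DSuc D0 assms in auto)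
  then show ?thesis using pos assms by blast
qed

lemma U_continuous: "continuous_on {0..} U"
proof -
  obtain Df where "\<And>x. x \<in> {0..} \<Longrightarrow> (U has_real_derivative Df x) (at x within {0..})"
    using U_positive_derivative by (metis atLeast_iff)
  then show ?thesis by (rule DERIV_continuous_on)
qed

lemma U_strict_mono:
  assumes "0 \<le> x" "x < y"
  shows "U x < U y"
proof -
  have "continuous_on {x..y} U"
    using U_continuous continuous_on_subset assms by fastforce
  moreover have "\<exists>d. DERIV U z :> d \<and> d > 0" if "x < z" "z < y" for z
  proof -
    have "0 \<le> z" using that assms by linarith
    then obtain d where "d > 0" "(U has_real_derivative d) (at z within {0..})"
      using U_positive_derivative by blast
    moreover have "at z within {0..} = at z"
      using that assms by (intro at_within_open_subset[of _ "{0<..}"]) auto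
    ultimately show ?thesis by auto
  qed
  ultimately show ?thesis using DERIV_pos_imp_increasing_open[OF assms(2)] by blast
qed

lemma U_le_iff: "0 \<le> x \<Longrightarrow> 0 \<le> y \<Longrightarrow> U x \<le> U y \<longleftrightarrow> x \<le> y"
  using U_strict_mono by (metis linorder_not_le order_le_less)

lemma Uinv_U: "0 \<le> x \<Longrightarrow> Uinv U (U x) = x"
proof -
  have "inj_on U {0..}"
    by (rule inj_onI) (metis U_le_iff atLeast_iff order_antisym order_refl)
  then show "0 \<le> x \<Longrightarrow> Uinv U (U x) = x" unfolding Uinv_def by (simp add: the_inv_into_f_f)
qed

text \<open>Every value in [0,1] is attained (intermediate value theorem), so \<open>Uinv\<close> is a
  right inverse there.\<close>
lemma U_Uinv:
  assumes "0 \<le> y" "y \<le> 1"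
  shows "0 \<le> Uinv U y \<and> U (Uinv U y) = y"
proof -
  have "continuous_on {0..1} U" using U_continuous continuous_on_subset by fastforce
  then obtain x where "0 \<le> x" "U x = y" using IVT'[of U 0 y 1] assms U_0 U_1 by auto
  then show ?thesis using Uinv_U by auto
qed

lemma H_range:
  assumes "0 \<le> x" "0 \<le> e" "U x + e \<le> 1"
  shows "0 \<le> Hf U e x \<and> U (Hf U e x) = U x + e"
  using U_Uinv[of "U x + e"] U_nonneg assms unfolding Hf_def by auto

lemma H_mono:
  assumes "0 \<le> x" "x \<le> y" "0 \<le> e" "U y + e \<le> 1"
  shows "Hf U e x \<le> Hf U e y"
proof -
  have "U x \<le> U y" using U_le_iff assms by auto
  then show ?thesis
    using H_range[of x e] H_range[of y e] assms U_le_iff[of "Hf U e x" "Hf U e y"] by auto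
qed

lemma H_zero: "0 \<le> x \<Longrightarrow> Hf U 0 x = x"
  unfolding Hf_def using Uinv_U by simp

lemma H_add:
  assumes "0 \<le> x" "0 \<le> a" "0 \<le> b" "U x + a + b \<le> 1"
  shows "Hf U b (Hf U a x) = Hf U (a + b) x"
  using H_range[of x a] assms unfolding Hf_def by (simp add: add.assoc)

text \<open>A phase y beyond H_e z (and still in the range of U) is reached by H_e from a
  phase z' \<ge> z: the pulse can absorb any later shift into its starting point.\<close>
lemma H_reach:
  assumes "0 \<le> z" "0 \<le> e" "U z + e \<le> 1" "Hf U e z \<le> y" "U y \<le> 1"
  shows "\<exists>z'\<ge>z. Hf U e z' = y \<and> U z' + e \<le> 1"
proof -
  have Hz: "0 \<le> Hf U e z" "U (Hf U e z) = U z + e" using H_range assms by auto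
  then have "0 \<le> y" "U z + e \<le> U y" using U_le_iff[of "Hf U e z" y] assms by auto
  define z' where "z' = Uinv U (U y - e)"
  have z': "0 \<le> z'" "U z' = U y - e"
    using U_Uinv[of "U y - e"] U_nonneg[of z] \<open>U z + e \<le> U y\<close> assms unfolding z'_def by auto
  then have "z \<le> z'" using U_le_iff[of z z'] \<open>U z + e \<le> U y\<close> assms by auto
  moreover have "Hf U e z' = y" using z' Uinv_U \<open>0 \<le> y\<close> unfolding Hf_def by simp
  ultimately show ?thesis using z' assms by auto
qed

lemma domD_memI:
  assumes "0 \<le> t" "0 \<le> d" "0 \<le> e" "U (t + d) + e \<le> 1"
  shows "(t, d, e) \<in> domD U"
proof -
  have e1: "e \<le> 1" using U_nonneg[of "t + d"] assms by auto
  then have inv: "0 \<le> Uinv U (1 - e)" "U (Uinv U (1 - e)) = 1 - e"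
    using U_Uinv[of "1 - e"] assms by auto
  have "t + d \<le> Uinv U (1 - e)" using U_le_iff[of "t + d" "Uinv U (1 - e)"] inv assms by auto
  moreover have "t + d \<le> 1" using U_le_iff[of "t + d" 1] U_1 assms by auto
  ultimately show ?thesis using assms e1 unfolding domD_def by auto
qed

lemma admissible_iff: "admissible U x e \<longleftrightarrow> 0 \<le> x \<and> 0 \<le> e \<and> U x + e \<le> 1"
proof
  assume "admissible U x e"
  then have *: "0 \<le> e" "e \<le> 1" "0 \<le> x" "x \<le> Uinv U (1 - e)"
    unfolding admissible_def domD_def by auto
  then have "U x \<le> 1 - e"
    using U_Uinv[of "1 - e"] U_le_iff[of x "Uinv U (1 - e)"] by auto
  then show "0 \<le> x \<and> 0 \<le> e \<and> U x + e \<le> 1" using * by auto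
qed (use domD_memI[of x 0 e] in \<open>auto simp: admissible_def\<close>)

text \<open>The defining property of icpd/dcpd, integrated: the increment of H_e over an
  interval of fixed length d grows (icpd) or shrinks (dcpd) as the interval moves right.\<close>
lemma increment_compare:
  assumes R: "cpd_order U R"
    and "0 \<le> e" "0 \<le> p" "p \<le> q" "0 \<le> d" "U (q + d) + e \<le> 1"
  shows "R (Hf U e (p + d) - Hf U e p) (Hf U e (q + d) - Hf U e q)"
proof -
  let ?S = "{t. (t, d, e) \<in> domD U}"
  let ?\<Delta> = "\<lambda>t. DeltaH U t d e"
  have slice: "{p..q} \<subseteq> ?S"
  proof
    fix t assume "t \<in> {p..q}"
    then have "U (t + d) \<le> U (q + d)" using U_le_iff assms by auto
    then show "t \<in> ?S" using domD_memI[of t d e] \<open>t \<in> {p..q}\<close> assms by auto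
  qed
  have "?\<Delta> p \<le> ?\<Delta> q" if "icpd U"
    by (rule increasing_from_deriv_within[OF \<open>p \<le> q\<close> slice])
      (use that slice in \<open>auto simp: icpd_def\<close>)
  moreover have "?\<Delta> q \<le> ?\<Delta> p" if "dcpd U"
    by (rule decreasing_from_deriv_within[OF \<open>p \<le> q\<close> slice])
      (use that slice in \<open>auto simp: dcpd_def\<close>)
  ultimately show ?thesis using R unfolding cpd_order_def DeltaH_def by auto
qed

text \<open>For
  icpd, shrink [a,A] from the left to length B - b; for dcpd, shrink [b,B] from the
  left to length A - a; then compare equal-length increments.\<close>
lemma difference_compare:
  assumes R: "cpd_order U R"
    and "0 \<le> e" "0 \<le> b" "b \<le> a" "b \<le> B" "B \<le> A" "a \<le> A" "U A + e \<le> 1"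
    and len: "R (B - b) (A - a)"
  shows "R (Hf U e B - Hf U e b) (Hf U e A - Hf U e a)"
  using R unfolding cpd_order_def
proof (elim disjE conjE)
  assume "R = (\<le>)"
  then have len_le: "B - b \<le> A - a" using len by simp
  define q where "q = A - (B - b)"
  have "R (Hf U e (b + (B - b)) - Hf U e b) (Hf U e (q + (B - b)) - Hf U e q)"
    using increment_compare[OF R, of e b q "B - b"] len_le assms unfolding q_def by auto
  moreover have "Hf U e a \<le> Hf U e q"
    using H_mono[of a q e] len_le assms U_le_iff[of q A] unfolding q_def by auto
  ultimately show ?thesis using \<open>R = (\<le>)\<close> unfolding q_def by simp
next
  assume "R = (\<ge>)"
  then have len_ge: "A - a \<le> B - b" using len by simp
  define p where "p = B - (A - a)"
  have "R (Hf U e (p + (A - a)) - Hf U e p) (Hf U e (a + (A - a)) - Hf U e a)"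
    using increment_compare[OF R, of e p a "A - a"] len_ge assms unfolding p_def by auto
  moreover have "Hf U e b \<le> Hf U e p"
    using H_mono[of b p e] len_ge assms U_le_iff[of p A] unfolding p_def by auto
  ultimately show ?thesis using \<open>R = (\<ge>)\<close> unfolding p_def by simp
qed

lemma compo_mono:
  assumes "x \<le> y" "chain_admissible U eps sig m x" "chain_admissible U eps sig m y"
  shows "compo U eps sig m x \<le> compo U eps sig m y"
  using assms(2,3)
proof (induction m)
  case (Suc m)
  then have "compo U eps sig m x \<le> compo U eps sig m y"
    and "admissible U (compo U eps sig m x) (eps (Suc m))"
    and "admissible U (compo U eps sig m y) (eps (Suc m))"
    by (simp_all add: chain_admissible_Suc)
  then show ?case using H_mono by (simp add: Sf_def admissible_iff)
qed (simp add: assms(1))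

text \<open>Since shifts only advance the phase, a single pulse of the total strength lags
  behind the composite map.\<close>
lemma H_le_compo:
  assumes "\<forall>r\<in>{1..m}. 0 \<le> eps r" "\<forall>r\<in>{1..m}. 0 \<le> sig r"
    and "chain_admissible U eps sig m x" "admissible U x (\<Sum>r=1..m. eps r)"
  shows "Hf U (\<Sum>r=1..m. eps r) x \<le> compo U eps sig m x"
  using assms
proof (induction m)
  case 0
  then show ?case by (simp add: H_zero admissible_iff)
next
  case (Suc m)
  define E e where "E = (\<Sum>r=1..m. eps r)" and "e = eps (Suc m)"
  have E: "0 \<le> E" using Suc.prems(1) unfolding E_def by (auto intro: sum_nonneg)
  have x: "0 \<le> x" "0 \<le> e" "U x + E + e \<le> 1" "0 \<le> sig (Suc m)"
    using Suc.prems(1,2,4) by (auto simp: admissible_iff E_def e_def add.assoc)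
  have c: "0 \<le> compo U eps sig m x" "U (compo U eps sig m x) + e \<le> 1"
    and chain: "chain_admissible U eps sig m x"
    using Suc.prems(3) by (auto simp: chain_admissible_Suc admissible_iff e_def)
  have "Hf U E x \<le> compo U eps sig m x"
    using Suc.IH Suc.prems chain x E by (auto simp: admissible_iff E_def)
  then have "Hf U e (Hf U E x) \<le> Hf U e (compo U eps sig m x)"
    using H_mono H_range[of x E] x E c by auto
  moreover have "Hf U e (Hf U E x) = Hf U (E + e) x" using H_add x E by auto
  ultimately show ?case using x by (simp add: Sf_def E_def e_def)
qed

lemma lower_compare:
  assumes R: "cpd_order U R" and \<psi>\<phi>: "\<psi> \<le> \<phi>"
    and "\<forall>r\<in>{1..m}. 0 \<le> eps r" "\<forall>r\<in>{1..m}. 0 \<le> sig r"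
    and "chain_admissible U eps sig m \<phi>" "chain_admissible U eps sig m \<psi>"
    and "admissible U \<phi> (\<Sum>r=1..m. eps r)" "admissible U \<psi> (\<Sum>r=1..m. eps r)"
  shows "R (Hf U (\<Sum>r=1..m. eps r) \<phi> - Hf U (\<Sum>r=1..m. eps r) \<psi>)
           (compo U eps sig m \<phi> - compo U eps sig m \<psi>)"
  using assms(3-)
proof (induction m)
  case 0
  then show ?case using R by (auto simp: H_zero admissible_iff cpd_order_def)
next
  case (Suc m)
  define E e where "E = (\<Sum>r=1..m. eps r)" and "e = eps (Suc m)"
  define a A b B where "a = compo U eps sig m \<psi>" and "A = compo U eps sig m \<phi>"
    and "b = Hf U E \<psi>" and "B = Hf U E \<phi>"
  have E: "0 \<le> E" using Suc.prems(1) unfolding E_def by (auto intro: sum_nonneg)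
  have start: "0 \<le> \<phi>" "0 \<le> \<psi>" "0 \<le> e" "U \<phi> + E + e \<le> 1" "U \<psi> + E + e \<le> 1"
    using Suc.prems(1,5,6) by (auto simp: admissible_iff E_def e_def add.assoc)
  have hyps_m: "\<forall>r\<in>{1..m}. 0 \<le> eps r" "\<forall>r\<in>{1..m}. 0 \<le> sig r"
    "chain_admissible U eps sig m \<phi>" "chain_admissible U eps sig m \<psi>"
    "admissible U \<phi> E" "admissible U \<psi> E"
    using Suc.prems start E by (auto simp: chain_admissible_Suc admissible_iff E_def)
  have A: "0 \<le> A" "U A + e \<le> 1" and "0 \<le> a"
    using Suc.prems(3,4) by (auto simp: chain_admissible_Suc admissible_iff A_def a_def e_def)
  have "b \<le> a" "B \<le> A"
    using H_le_compo hyps_m unfolding a_def A_def b_def B_def E_def by auto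
  moreover have "a \<le> A" using compo_mono \<psi>\<phi> hyps_m unfolding a_def A_def by auto
  moreover have "b \<le> B" "0 \<le> b"
    using H_mono[of \<psi> \<phi> E] H_range[of \<psi> E] \<psi>\<phi> start E unfolding b_def B_def by auto
  moreover have "R (B - b) (A - a)"
    using Suc.IH hyps_m unfolding a_def A_def b_def B_def E_def by auto
  ultimately have "R (Hf U e B - Hf U e b) (Hf U e A - Hf U e a)"
    using difference_compare[OF R] start A by auto
  moreover have "Hf U e B = Hf U (E + e) \<phi>" "Hf U e b = Hf U (E + e) \<psi>"
    using H_add start E unfolding b_def B_def by auto
  ultimately show ?case by (simp add: Sf_def a_def A_def E_def e_def)
qed

text \<open>Induction on m: each shift by sig is absorbed into a larger s,
  and the increments over [\<psi> + s, \<psi> + s'] and [\<phi> + s, \<phi> + s'] are compared.\<close>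
lemma upper_shift:
  assumes R: "cpd_order U R" and \<psi>\<phi>: "\<psi> \<le> \<phi>"
    and "\<forall>r\<in>{1..m}. 0 \<le> eps r" "\<forall>r\<in>{1..m}. 0 \<le> sig r"
    and "chain_admissible U eps sig m \<phi>" "chain_admissible U eps sig m \<psi>"
    and "admissible U \<phi> (\<Sum>r=1..m. eps r)" "admissible U \<psi> (\<Sum>r=1..m. eps r)"
    and "U (compo U eps sig m \<phi>) \<le> 1"
  shows "\<exists>s\<ge>0. compo U eps sig m \<phi> = Hf U (\<Sum>r=1..m. eps r) (\<phi> + s)
           \<and> U (\<phi> + s) + (\<Sum>r=1..m. eps r) \<le> 1
           \<and> R (Hf U (\<Sum>r=1..m. eps r) (\<psi> + s)) (compo U eps sig m \<psi>)"
  using assms(3-)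
proof (induction m)
  case 0
  then show ?case using R by (auto simp: H_zero admissible_iff cpd_order_def intro!: exI[of _ 0])
next
  case (Suc m)
  define E e \<sigma> E' where "E = (\<Sum>r=1..m. eps r)" and "e = eps (Suc m)"
    and "\<sigma> = sig (Suc m)" and "E' = E + e"
  define a y where "a = compo U eps sig m \<psi>" and "y = compo U eps sig (Suc m) \<phi>"
  have E: "0 \<le> E" using Suc.prems(1) unfolding E_def by (auto intro: sum_nonneg)
  have start: "0 \<le> \<phi>" "0 \<le> \<psi>" "0 \<le> e" "0 \<le> \<sigma>"
    using Suc.prems(1,2,5,6) by (auto simp: admissible_iff e_def \<sigma>_def)
  have chain_m: "chain_admissible U eps sig m \<phi>" "chain_admissible U eps sig m \<psi>"
    and top_m: "U (compo U eps sig m \<phi>) + e \<le> 1"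
    and a: "0 \<le> a" "U a + e \<le> 1"
    using Suc.prems(3,4) by (auto simp: chain_admissible_Suc admissible_iff a_def e_def)
  have "admissible U \<phi> E" "admissible U \<psi> E"
    using Suc.prems(5,6) start E by (auto simp: admissible_iff E_def e_def)
  then obtain s where s: "0 \<le> s" "compo U eps sig m \<phi> = Hf U E (\<phi> + s)"
      "U (\<phi> + s) + E \<le> 1" and IH_R: "R (Hf U E (\<psi> + s)) a"
    using Suc.IH Suc.prems(1,2) chain_m top_m U_nonneg[of "compo U eps sig m \<phi>"] start
    unfolding E_def a_def by (fastforce simp: add_increasing2)
  have Us: "U (\<phi> + s) + E + e \<le> 1"
    using H_range[of "\<phi> + s" E] s start E top_m by auto
  have U\<psi>s: "U (\<psi> + s) \<le> U (\<phi> + s)" using U_le_iff \<psi>\<phi> start s by auto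
  \<comment> \<open>the new phase of \<phi> is reached by one pulse from a larger shift s'\<close>
  have Hy: "y = Hf U E' (\<phi> + s) + \<sigma>"
    using H_add[of "\<phi> + s" E e] s start E Us unfolding y_def E'_def e_def \<sigma>_def
    by (simp add: Sf_def)
  obtain x where x: "\<phi> + s \<le> x" "Hf U E' x = y" "U x + E' \<le> 1"
    using H_reach[of "\<phi> + s" E' y] Hy Suc.prems(7) start E s Us
    unfolding y_def E'_def by (auto simp: add.assoc)
  define s' where "s' = x - \<phi>"
  have s': "s \<le> s'" "\<phi> + s' = x" using x unfolding s'_def by auto
  \<comment> \<open>the invariant for \<psi> survives the pulse (H is monotone) and the shift by \<sigma>\<close>
  have "R (Hf U E' (\<psi> + s + (s' - s)) - Hf U E' (\<psi> + s))
          (Hf U E' (\<phi> + s + (s' - s)) - Hf U E' (\<phi> + s))"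
    using increment_compare[OF R, of E' "\<psi> + s" "\<phi> + s" "s' - s"] s s' x start E \<psi>\<phi>
    unfolding E'_def by auto
  then have incr: "R (Hf U E' (\<psi> + s')) (Hf U E' (\<psi> + s) + \<sigma>)"
    using s' x Hy R unfolding cpd_order_def by auto
  have "R (Hf U e (Hf U E (\<psi> + s))) (Hf U e a)"
    using R IH_R H_mono[of a "Hf U E (\<psi> + s)" e] H_mono[of "Hf U E (\<psi> + s)" a e]
      H_range[of "\<psi> + s" E] a start E s U\<psi>s Us
    unfolding cpd_order_def by auto
  moreover have "Hf U e (Hf U E (\<psi> + s)) = Hf U E' (\<psi> + s)"
    using H_add[of "\<psi> + s" E e] start E s U\<psi>s Us unfolding E'_def by auto
  ultimately have "R (Hf U E' (\<psi> + s')) (compo U eps sig (Suc m) \<psi>)"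
    using incr R unfolding cpd_order_def by (auto simp: Sf_def a_def e_def \<sigma>_def)
  then show ?case
    using s s' x unfolding y_def E'_def E_def e_def by (intro exI[of _ s']) auto
qed

text \<open>Upper bound: if the composite map does not overtake H_E o S_{\<sigma>u} at \<phi>, then the
  shift of the previous lemma is at most \<sigma>u, and moving the interval [\<psi>, \<phi>] from
  shift s to shift \<sigma>u changes the H_E-increment in the order R.\<close>
lemma upper_compare:
  assumes R: "cpd_order U R" and \<psi>\<phi>: "\<psi> \<le> \<phi>"
    and "\<forall>r\<in>{1..m}. 0 \<le> eps r" "\<forall>r\<in>{1..m}. 0 \<le> sig r"
    and "chain_admissible U eps sig m \<phi>" "chain_admissible U eps sig m \<psi>"
    and "admissible U \<phi> (\<Sum>r=1..m. eps r)" "admissible U \<psi> (\<Sum>r=1..m. eps r)"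
    and \<sigma>u: "admissible U (\<phi> + \<sigma>u) (\<Sum>r=1..m. eps r)" "0 \<le> \<sigma>u"
    and upper: "compo U eps sig m \<phi> \<le> Hf U (\<Sum>r=1..m. eps r) (\<phi> + \<sigma>u)"
  shows "R (compo U eps sig m \<phi> - compo U eps sig m \<psi>)
           (Hf U (\<Sum>r=1..m. eps r) (\<phi> + \<sigma>u) - Hf U (\<Sum>r=1..m. eps r) (\<psi> + \<sigma>u))"
proof -
  define E c where "E = (\<Sum>r=1..m. eps r)" and "c = compo U eps sig m"
  have E: "0 \<le> E" using assms(3) unfolding E_def by (auto intro: sum_nonneg)
  have start: "0 \<le> \<phi>" "0 \<le> \<psi>" "U (\<phi> + \<sigma>u) + E \<le> 1"
    using assms(7,8) \<sigma>u by (auto simp: admissible_iff E_def)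
  have H\<sigma>u: "0 \<le> Hf U E (\<phi> + \<sigma>u)" "U (Hf U E (\<phi> + \<sigma>u)) = U (\<phi> + \<sigma>u) + E"
    using H_range start \<sigma>u E by auto
  have "0 \<le> c \<phi>"
    using H_le_compo[of m eps sig \<phi>] H_range[of \<phi> E] assms(3-7) start E
    unfolding c_def E_def by (force simp: admissible_iff)
  moreover have "c \<phi> \<le> Hf U E (\<phi> + \<sigma>u)" using upper unfolding c_def E_def .
  ultimately have Uc: "U (c \<phi>) \<le> U (Hf U E (\<phi> + \<sigma>u))"
    using U_le_iff[of "c \<phi>" "Hf U E (\<phi> + \<sigma>u)"] H\<sigma>u(1) by auto
  obtain s where s: "0 \<le> s" "c \<phi> = Hf U E (\<phi> + s)" "U (\<phi> + s) + E \<le> 1"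
      and below: "R (Hf U E (\<psi> + s)) (c \<psi>)"
    using upper_shift[OF R \<psi>\<phi> assms(3-8)] Uc H\<sigma>u start unfolding c_def E_def by auto
  have "s \<le> \<sigma>u"
    using Uc s H_range[of "\<phi> + s" E] U_le_iff[of "\<phi> + s" "\<phi> + \<sigma>u"] H\<sigma>u start E \<sigma>u
    by auto
  moreover have "U (\<psi> + \<sigma>u + (\<phi> - \<psi>)) + E \<le> 1"
    using start by (simp add: algebra_simps)
  ultimately have "R (Hf U E (\<psi> + s + (\<phi> - \<psi>)) - Hf U E (\<psi> + s))
               (Hf U E (\<psi> + \<sigma>u + (\<phi> - \<psi>)) - Hf U E (\<psi> + \<sigma>u))"
    using increment_compare[OF R, of E "\<psi> + s" "\<psi> + \<sigma>u" "\<phi> - \<psi>"] start s E \<psi>\<phi>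
    by auto
  then show ?thesis
    using below s R unfolding cpd_order_def c_def E_def by (auto simp: algebra_simps)
qed

end

theorem mainTheorem5:
  fixes U :: "real \<Rightarrow> real" and m :: nat
    and eps sig :: "nat \<Rightarrow> real" and \<sigma>l \<sigma>u \<phi> \<psi> :: real
  assumes rise: "rise_function U"
    and m: "m \<ge> 1"
    and eps_nn: "\<forall>r\<in>{1..m}. eps r \<ge> 0"
    and sig_nn: "\<forall>r\<in>{1..m}. sig r \<ge> 0"
    and \<sigma>l: "\<sigma>l \<ge> 0"
    and \<sigma>u: "\<sigma>u \<ge> 0"
    and upper: "compo U eps sig m \<phi> \<le> Hf U (\<Sum>r=1..m. eps r) (Sf \<sigma>u \<phi>)"
    and \<psi>\<phi>: "\<psi> \<le> \<phi>"
    and rng_chain: "\<forall>r\<in>{1..m}. admissible U (compo U eps sig (r - 1) \<phi>) (eps r)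
                              \<and> admissible U (compo U eps sig (r - 1) \<psi>) (eps r)"
    and rng_H: "admissible U \<phi> (\<Sum>r=1..m. eps r) \<and> admissible U \<psi> (\<Sum>r=1..m. eps r)"
    and rng_HS: "admissible U (Sf \<sigma>u \<phi>) (\<Sum>r=1..m. eps r)
               \<and> admissible U (Sf \<sigma>u \<psi>) (\<Sum>r=1..m. eps r)"
  shows "(icpd U \<longrightarrow>
            Sf \<sigma>l (Hf U (\<Sum>r=1..m. eps r) \<phi>) - Sf \<sigma>l (Hf U (\<Sum>r=1..m. eps r) \<psi>)
              \<le> compo U eps sig m \<phi> - compo U eps sig m \<psi>
          \<and> compo U eps sig m \<phi> - compo U eps sig m \<psi>
              \<le> Hf U (\<Sum>r=1..m. eps r) (Sf \<sigma>u \<phi>) - Hf U (\<Sum>r=1..m. eps r) (Sf \<sigma>u \<psi>))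
       \<and> (dcpd U \<longrightarrow>
            Sf \<sigma>l (Hf U (\<Sum>r=1..m. eps r) \<phi>) - Sf \<sigma>l (Hf U (\<Sum>r=1..m. eps r) \<psi>)
              \<ge> compo U eps sig m \<phi> - compo U eps sig m \<psi>
          \<and> compo U eps sig m \<phi> - compo U eps sig m \<psi>
              \<ge> Hf U (\<Sum>r=1..m. eps r) (Sf \<sigma>u \<phi>) - Hf U (\<Sum>r=1..m. eps r) (Sf \<sigma>u \<psi>))"
proof -
  have chains: "chain_admissible U eps sig m \<phi>" "chain_admissible U eps sig m \<psi>"
    using rng_chain by (auto simp: chain_admissible_def)
  have bounds:
    "R (Sf \<sigma>l (Hf U (\<Sum>r=1..m. eps r) \<phi>) - Sf \<sigma>l (Hf U (\<Sum>r=1..m. eps r) \<psi>))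
       (compo U eps sig m \<phi> - compo U eps sig m \<psi>)
     \<and> R (compo U eps sig m \<phi> - compo U eps sig m \<psi>)
         (Hf U (\<Sum>r=1..m. eps r) (Sf \<sigma>u \<phi>) - Hf U (\<Sum>r=1..m. eps r) (Sf \<sigma>u \<psi>))"
    if R: "cpd_order U R" for R
    using lower_compare[OF rise R \<psi>\<phi> eps_nn sig_nn chains]
      upper_compare[OF rise R \<psi>\<phi> eps_nn sig_nn chains, of \<sigma>u] rng_H rng_HS \<sigma>u upper
    by (simp add: Sf_def)
  show ?thesis using bounds[of "(\<le>)"] bounds[of "(\<ge>)"] by (auto simp: cpd_order_def)
qed

end
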